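(* Let $X,Y$ be random vectors in $\mathbb{R}^m$ and $\mathbb{R}^n$, and let $\mu,\nu$ be finite symmetric Lévy measures on $\mathbb{R}^m\setminus\{0\}$ and $\mathbb{R}^n\setminus\{0\}$ with full support. Let $\Phi(x)=\int(1-\cos\langle x,s\rangle)\mu(ds)$, $\Psi(y)=\int(1-\cos\langle y,t\rangle)\nu(dt)$, $\rho=\mu\otimes\nu$ and $\Theta(u)=\int(1-\cos\langle u,r\rangle)\,\rho(dr)$ for $u\in\mathbb{R}^{m+n}$. Let $(X_i,Y_i)$, $i=1,\dots,6$, be i.i.d. copies of $(X,Y)$ and set $U=(X_1,Y_1)$, $V=(X_2,Y_3)$, $U'=(X_4,Y_4)$, $V'=(X_5,Y_6)$. Then \begin{align*} V^2(X,Y)&=d_\rho^2(\mathcal L(U),\mathcal L(V))=2\mathbb{E}\Theta(U-V')-\mathbb{E}\Theta(U-U')-\mathbb{E}\Theta(V-V')\\ &=2\mathbb{E}\Theta(X_1-X_5,Y_1-Y_6)-\mathbb{E}\Theta(X_1-X_4,Y_1-Y_4)-\mathbb{E}\Theta(X_2-X_5,Y_3-Y_6)\\ &=\mathbb{E}\Phi(X_1-X_4)\Psi(Y_1-Y_4)+\mathbb{E}\Phi(X_2-X_5)\,\mathbb{E}\Psi(Y_3-Y_6)-2\mathbb{E}\Phi(X_1-X_5)\Psi(Y_1-Y_6). \end{align*}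
   Context: Symmetric Lévy measure on $\mathbb{R}^d\setminus\{0\}$: $\rho(B)=\rho(-B)$ and $\int(1\wedge|r|^2)\rho(dr)<\infty$; full support: positive mass on every nonempty open subset. $V^2(X,Y)=\iint|f_{(X,Y)}(s,t)-f_X(s)f_Y(t)|^2\,\mu(ds)\,\nu(dt)$ with $f$ characteristic functions; for random vectors $U,V$ in $\mathbb{R}^d$, $d_\rho(\mathcal L(U),\mathcal L(V))=(\int|f_U-f_V|^2\,d\rho)^{1/2}$. *)

theory Defs
  imports "HOL-Probability.Probability"
begin

definition charf :: "'b::euclidean_space measure \<Rightarrow> 'b \<Rightarrow> complex" where
  "charf P s = integral\<^sup>L P (\<lambda>x. cis (s \<bullet> x))"

definition char_fun :: "'a measure \<Rightarrow> ('a \<Rightarrow> 'b::euclidean_space) \<Rightarrow> 'b \<Rightarrow> complex" where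
  "char_fun M X s = charf (distr M borel X) s"

definition sym_levy_measure :: "'b::euclidean_space measure \<Rightarrow> bool" where
  "sym_levy_measure \<mu> \<longleftrightarrow>
     sets \<mu> = sets borel \<and> emeasure \<mu> {0} = 0 \<and>
     (\<forall>B\<in>sets \<mu>. emeasure \<mu> (uminus ` B) = emeasure \<mu> B) \<and>
     (\<integral>\<^sup>+ r. ennreal (min 1 (norm r ^ 2)) \<partial>\<mu>) < \<infinity>"

definition full_support :: "'b::euclidean_space measure \<Rightarrow> bool" where
  "full_support \<mu> \<longleftrightarrow> (\<forall>U. open U \<and> U \<noteq> {} \<and> 0 \<notin> U \<longrightarrow> emeasure \<mu> U > 0)"

definition dcov_sq :: "'a measure \<Rightarrow> 'm::euclidean_space measure \<Rightarrow> 'n::euclidean_space measure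
    \<Rightarrow> ('a \<Rightarrow> 'm) \<Rightarrow> ('a \<Rightarrow> 'n) \<Rightarrow> real" where
  "dcov_sq M \<mu> \<nu> X Y =
     (\<integral>t. (\<integral>s. (cmod (char_fun M (\<lambda>\<omega>. (X \<omega>, Y \<omega>)) (s, t) - char_fun M X s * char_fun M Y t))\<^sup>2 \<partial>\<mu>) \<partial>\<nu>)"

definition d_rho :: "'b::euclidean_space measure \<Rightarrow> 'b measure \<Rightarrow> 'b measure \<Rightarrow> real" where
  "d_rho \<rho> P Q = sqrt (\<integral>r. (cmod (charf P r - charf Q r))\<^sup>2 \<partial>\<rho>)"

end

theory Submission
  imports Defs
begin

text \<open>\<open>U\<close> has the law of \<open>(X, Y)\<close> and \<open>V\<close> the product of its marginals, so by Fubini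
  \<open>V\<^sup>2(X, Y)\<close> is the squared \<open>d\<^sub>\<rho>\<close>-distance of their laws. For independent \<open>W, W'\<close> the
  characteristic function of \<open>W\<close> times the conjugate of that of \<open>W'\<close> is the characteristic
  function of \<open>W - W'\<close>; expanding \<open>|f\<^sub>U - f\<^sub>V|\<^sup>2\<close> and applying Fubini once more gives the
  energy form in \<open>\<Theta>\<close>. Finally \<open>1 - cos (a + b) = 1 - cos a cos b + sin a sin b\<close>, and the
  sine term integrates to zero by symmetry of \<open>\<nu>\<close>, so
  \<open>\<Theta>(x, y) = \<nu>(\<real>\<^sup>n) \<Phi>(x) + \<mu>(\<real>\<^sup>m) \<Psi>(y) - \<Phi>(x) \<Psi>(y)\<close>. The linear terms cancel because
  every \<open>X\<^sub>i - X\<^sub>j\<close> with \<open>i \<noteq> j\<close> has the same law, and the last product factors because the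
  copies \<open>{2, 5}\<close> and \<open>{3, 6}\<close> are independent.\<close>

definition levy_exponent :: "'b::euclidean_space measure \<Rightarrow> 'b \<Rightarrow> real" where
  "levy_exponent \<mu> x = (\<integral>s. 1 - cos (x \<bullet> s) \<partial>\<mu>)"

lemma sets_pair_measure_borel:
  assumes "sets A = sets (borel::'a::second_countable_topology measure)"
    and "sets B = sets (borel::'b::second_countable_topology measure)"
  shows "sets (A \<Otimes>\<^sub>M B) = sets (borel :: ('a \<times> 'b) measure)"
  using sets_pair_measure_cong[OF assms] borel_prod by metis

lemma borel_measurable_cis_inner [measurable]:
  "(\<lambda>x. cis (r \<bullet> (x::'b::euclidean_space))) \<in> borel_measurable borel"
  by (intro borel_measurable_continuous_onI continuous_intros)

lemma charf_distr:
  assumes "Z \<in> borel_measurable M"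
  shows "charf (distr M borel Z) r = (\<integral>\<omega>. cis (r \<bullet> Z \<omega>) \<partial>M)"
  unfolding charf_def using assms by (subst integral_distr) auto

lemma norm_charf_le_1:
  assumes "prob_space P"
  shows "cmod (charf P r) \<le> 1"
proof -
  interpret prob_space P by fact
  have "cmod (charf P r) \<le> (\<integral>x. norm (cis (r \<bullet> x)) \<partial>P)"
    unfolding charf_def by (rule integral_norm_bound)
  then show ?thesis by (simp add: prob_space)
qed

lemma borel_measurable_charf:
  fixes P :: "'b::euclidean_space measure"
  assumes "prob_space P" "sets P = sets borel" "sets N = sets borel"
  shows "charf P \<in> borel_measurable N"
proof -
  interpret prob_space P by fact
  have "(\<lambda>(r, x). cis (r \<bullet> (x::'b))) \<in> borel_measurable borel"
    by (intro borel_measurable_continuous_onI continuous_intros)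
      (auto simp: case_prod_beta intro!: continuous_intros)
  then have "(\<lambda>(r, x). cis (r \<bullet> (x::'b))) \<in> borel_measurable (N \<Otimes>\<^sub>M P)"
    using measurable_cong_sets[OF sets_pair_measure_borel[OF assms(3,2)] refl] by blast
  then show ?thesis
    unfolding charf_def[abs_def] by (intro borel_measurable_lebesgue_integral) auto
qed

lemma (in finite_measure) integrable_bounded:
  assumes "f \<in> borel_measurable M" "\<And>\<omega>. \<bar>f \<omega>\<bar> \<le> (B::real)"
  shows "integrable M f"
  using assms by (intro integrable_const_bound[where B=B]) auto

lemma (in prob_space) integral_cos_diff_indep:
  assumes "indep_var borel A borel B"
  shows "(\<integral>\<omega>. cos (r \<bullet> (A \<omega> - B \<omega>)) \<partial>M)
    = Re (charf (distr M borel A) r * cnj (charf (distr M borel B) r))"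
proof -
  have A: "A \<in> borel_measurable M" and B: "B \<in> borel_measurable M"
    using indep_var_rv1[OF assms] indep_var_rv2[OF assms] by auto
  have ind: "indep_var borel (\<lambda>\<omega>. cis (r \<bullet> A \<omega>)) borel (\<lambda>\<omega>. cnj (cis (r \<bullet> B \<omega>)))"
    using indep_var_compose[OF assms, of "\<lambda>x. cis (r \<bullet> x)" borel "\<lambda>x. cnj (cis (r \<bullet> x))" borel]
    by (simp add: comp_def borel_measurable_continuous_onI continuous_intros)
  have "integrable M (\<lambda>\<omega>. cis (r \<bullet> A \<omega>))" "integrable M (\<lambda>\<omega>. cnj (cis (r \<bullet> B \<omega>)))"
    using A B by (auto intro!: integrable_const_bound[where B=1])
  from indep_var_lebesgue_integral[OF ind this]
  have "charf (distr M borel A) r * cnj (charf (distr M borel B) r)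
      = (\<integral>\<omega>. cis (r \<bullet> A \<omega>) * cnj (cis (r \<bullet> B \<omega>)) \<partial>M)"
    using A B by (simp add: charf_distr)
  also have "\<dots> = (\<integral>\<omega>. cis (r \<bullet> (A \<omega> - B \<omega>)) \<partial>M)"
    by (simp add: cis_cnj cis_mult inner_diff_right)
  finally have "charf (distr M borel A) r * cnj (charf (distr M borel B) r)
      = (\<integral>\<omega>. cis (r \<bullet> (A \<omega> - B \<omega>)) \<partial>M)" .
  moreover have "integrable M (\<lambda>\<omega>. cis (r \<bullet> (A \<omega> - B \<omega>)))"
    using A B by (auto intro!: integrable_const_bound[where B=1])
  ultimately show ?thesis
    using integral_Re[of M "\<lambda>\<omega>. cis (r \<bullet> (A \<omega> - B \<omega>))"] by simp
qed

lemma integrable_levy_exponent_integrand: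
  fixes \<mu> :: "'b::euclidean_space measure"
  assumes "finite_measure \<mu>" "sets \<mu> = sets borel"
  shows "integrable \<mu> (\<lambda>s. 1 - cos (x \<bullet> s))"
proof -
  interpret finite_measure \<mu> by fact
  have "(\<lambda>s. 1 - cos (x \<bullet> s)) \<in> borel_measurable \<mu>"
    unfolding measurable_cong_sets[OF assms(2) refl]
    by (intro borel_measurable_continuous_onI continuous_intros)
  then show ?thesis
    by (intro integrable_const_bound[where B=2]) auto
qed

lemma levy_exponent_nonneg: "0 \<le> levy_exponent \<mu> x"
  unfolding levy_exponent_def by (intro Bochner_Integration.integral_nonneg) auto

lemma levy_exponent_le:
  fixes \<mu> :: "'b::euclidean_space measure"
  assumes "finite_measure \<mu>" "sets \<mu> = sets borel"
  shows "levy_exponent \<mu> x \<le> 2 * measure \<mu> (space \<mu>)"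
proof -
  interpret finite_measure \<mu> by fact
  have "levy_exponent \<mu> x \<le> (\<integral>s. 2 \<partial>\<mu>)"
    unfolding levy_exponent_def using integrable_levy_exponent_integrand[OF assms]
    by (intro integral_mono) auto
  then show ?thesis by simp
qed

lemma borel_measurable_levy_exponent [measurable]:
  fixes \<mu> :: "'b::euclidean_space measure"
  assumes "finite_measure \<mu>" "sets \<mu> = sets borel"
  shows "levy_exponent \<mu> \<in> borel_measurable borel"
proof -
  interpret finite_measure \<mu> by fact
  have "(\<lambda>(x, s). 1 - cos (x \<bullet> (s::'b))) \<in> borel_measurable borel"
    by (intro borel_measurable_continuous_onI)
      (auto simp: case_prod_beta intro!: continuous_intros)
  then have "(\<lambda>(x, s). 1 - cos (x \<bullet> (s::'b))) \<in> borel_measurable (borel \<Otimes>\<^sub>M \<mu>)"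
    using measurable_cong_sets[OF sets_pair_measure_borel[OF refl assms(2)] refl] by blast
  then show ?thesis
    unfolding levy_exponent_def[abs_def] by (intro borel_measurable_lebesgue_integral) auto
qed

lemma (in prob_space) integral_levy_exponent_Fubini:
  fixes W :: "'a \<Rightarrow> 'b::euclidean_space"
  assumes "finite_measure \<rho>" "sets \<rho> = sets borel" "W \<in> borel_measurable M"
  shows "integrable \<rho> (\<lambda>r. \<integral>\<omega>. 1 - cos (r \<bullet> W \<omega>) \<partial>M)"
    and "(\<integral>r. (\<integral>\<omega>. 1 - cos (r \<bullet> W \<omega>) \<partial>M) \<partial>\<rho>) = (\<integral>\<omega>. levy_exponent \<rho> (W \<omega>) \<partial>M)"
proof -
  interpret R: finite_measure \<rho> by fact
  interpret pair_sigma_finite \<rho> M ..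
  interpret RM: finite_measure "\<rho> \<Otimes>\<^sub>M M"
    by (rule finite_measure_pair_measure) (auto simp: assms(1) finite_measure_axioms)
  have "(\<lambda>x. (fst x, W (snd x))) \<in> measurable (\<rho> \<Otimes>\<^sub>M M) (borel \<Otimes>\<^sub>M borel)"
    using measurable_compose[OF measurable_fst measurable_ident_sets[OF assms(2)]]
      measurable_compose[OF measurable_snd assms(3)] by (rule measurable_Pair)
  then have pair: "(\<lambda>x. (fst x, W (snd x))) \<in> measurable (\<rho> \<Otimes>\<^sub>M M) borel"
    unfolding measurable_cong_sets[OF refl sets_pair_measure_borel[OF refl refl]] .
  have kernel: "(\<lambda>(r, w). 1 - cos (r \<bullet> (w::'b))) \<in> borel_measurable borel"
    by (intro borel_measurable_continuous_onI)
      (auto simp: case_prod_beta intro!: continuous_intros)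
  have "(\<lambda>(r, \<omega>). 1 - cos (r \<bullet> W \<omega>)) \<in> borel_measurable (\<rho> \<Otimes>\<^sub>M M)"
    using measurable_compose[OF pair kernel] by (simp add: case_prod_beta')
  then have int: "integrable (\<rho> \<Otimes>\<^sub>M M) (\<lambda>(r, \<omega>). 1 - cos (r \<bullet> W \<omega>))"
    by (intro RM.integrable_const_bound[where B=2]) auto
  show "integrable \<rho> (\<lambda>r. \<integral>\<omega>. 1 - cos (r \<bullet> W \<omega>) \<partial>M)"
    using integrable_fst[OF int] .
  show "(\<integral>r. (\<integral>\<omega>. 1 - cos (r \<bullet> W \<omega>) \<partial>M) \<partial>\<rho>) = (\<integral>\<omega>. levy_exponent \<rho> (W \<omega>) \<partial>M)"
    using Fubini_integral[OF int] by (simp add: levy_exponent_def inner_commute)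
qed

lemma (in prob_space) expectation_levy_exponent_diff_indep:
  assumes "finite_measure \<rho>" "sets \<rho> = sets borel" "indep_var borel A borel B"
  defines "k \<equiv> \<lambda>r. 1 - Re (charf (distr M borel A) r * cnj (charf (distr M borel B) r))"
  shows "integrable \<rho> k" and "(\<integral>\<omega>. levy_exponent \<rho> (A \<omega> - B \<omega>) \<partial>M) = (\<integral>r. k r \<partial>\<rho>)"
proof -
  have W: "(\<lambda>\<omega>. A \<omega> - B \<omega>) \<in> borel_measurable M"
    using indep_var_rv1[OF assms(3)] indep_var_rv2[OF assms(3)] by auto
  have "(\<integral>\<omega>. 1 - cos (r \<bullet> (A \<omega> - B \<omega>)) \<partial>M) = k r" for r
  proof -
    have "integrable M (\<lambda>\<omega>. cos (r \<bullet> (A \<omega> - B \<omega>)))"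
      using W by (intro integrable_bounded[where B=1]) auto
    then show ?thesis
      by (simp add: k_def integral_cos_diff_indep[OF assms(3)] prob_space)
  qed
  then show "integrable \<rho> k" and "(\<integral>\<omega>. levy_exponent \<rho> (A \<omega> - B \<omega>) \<partial>M) = (\<integral>r. k r \<partial>\<rho>)"
    using integral_levy_exponent_Fubini[OF assms(1,2) W] by simp_all
qed

lemma cmod_diff_squared:
  "(cmod (a - b))\<^sup>2 = Re (a * cnj a) + Re (b * cnj b) - 2 * Re (a * cnj b)"
  by (subst cmod_power2) (simp add: power2_eq_square algebra_simps)

lemma (in prob_space) d_rho_squared_energy:
  assumes "finite_measure \<rho>" "sets \<rho> = sets borel"
    and "indep_var borel U borel U'" "indep_var borel U borel V'" "indep_var borel V borel V'"
    and "charf (distr M borel U') = charf (distr M borel U)"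
    and "charf (distr M borel V') = charf (distr M borel V)"
  shows "(d_rho \<rho> (distr M borel U) (distr M borel V))\<^sup>2
    = 2 * (\<integral>\<omega>. levy_exponent \<rho> (U \<omega> - V' \<omega>) \<partial>M)
      - (\<integral>\<omega>. levy_exponent \<rho> (U \<omega> - U' \<omega>) \<partial>M) - (\<integral>\<omega>. levy_exponent \<rho> (V \<omega> - V' \<omega>) \<partial>M)"
proof -
  define f where "f = charf (distr M borel U)"
  define g where "g = charf (distr M borel V)"
  define kUV kUU kVV where "kUV r = 1 - Re (f r * cnj (g r))" and "kUU r = 1 - Re (f r * cnj (f r))"
    and "kVV r = 1 - Re (g r * cnj (g r))" for r
  have UV': "integrable \<rho> kUV" "(\<integral>\<omega>. levy_exponent \<rho> (U \<omega> - V' \<omega>) \<partial>M) = (\<integral>r. kUV r \<partial>\<rho>)"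
    using expectation_levy_exponent_diff_indep[OF assms(1,2,4)]
    unfolding kUV_def[abs_def] f_def g_def assms(7) by auto
  have UU': "integrable \<rho> kUU" "(\<integral>\<omega>. levy_exponent \<rho> (U \<omega> - U' \<omega>) \<partial>M) = (\<integral>r. kUU r \<partial>\<rho>)"
    using expectation_levy_exponent_diff_indep[OF assms(1,2,3)]
    unfolding kUU_def[abs_def] f_def assms(6) by auto
  have VV': "integrable \<rho> kVV" "(\<integral>\<omega>. levy_exponent \<rho> (V \<omega> - V' \<omega>) \<partial>M) = (\<integral>r. kVV r \<partial>\<rho>)"
    using expectation_levy_exponent_diff_indep[OF assms(1,2,5)]
    unfolding kVV_def[abs_def] g_def assms(7) by auto
  have "(\<lambda>r. (cmod (f r - g r))\<^sup>2) = (\<lambda>r. 2 * kUV r - kUU r - kVV r)"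
    by (simp add: cmod_diff_squared kUV_def kUU_def kVV_def algebra_simps)
  then have "(\<integral>r. (cmod (f r - g r))\<^sup>2 \<partial>\<rho>) = 2 * (\<integral>r. kUV r \<partial>\<rho>) - (\<integral>r. kUU r \<partial>\<rho>) - (\<integral>r. kVV r \<partial>\<rho>)"
    using UV'(1) UU'(1) VV'(1) by simp
  moreover have "0 \<le> (\<integral>r. (cmod (f r - g r))\<^sup>2 \<partial>\<rho>)"
    by (intro Bochner_Integration.integral_nonneg) simp
  ultimately show ?thesis
    by (simp add: d_rho_def f_def g_def UV'(2) UU'(2) VV'(2))
qed

lemma integral_sin_inner_sym_levy:
  fixes \<nu> :: "'b::euclidean_space measure"
  assumes "sym_levy_measure \<nu>"
  shows "(\<integral>t. sin (y \<bullet> t) \<partial>\<nu>) = 0"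
proof -
  have sets: "sets \<nu> = sets borel"
    and sym: "\<And>B. B \<in> sets \<nu> \<Longrightarrow> emeasure \<nu> (uminus ` B) = emeasure \<nu> B"
    using assms unfolding sym_levy_measure_def by auto
  have uminus: "(uminus :: 'b \<Rightarrow> 'b) \<in> measurable \<nu> borel"
    unfolding measurable_cong_sets[OF sets refl] by simp
  have "distr \<nu> borel uminus = \<nu>"
  proof (rule measure_eqI)
    fix A assume "A \<in> sets (distr \<nu> borel uminus)"
    moreover have "uminus -` A \<inter> space \<nu> = uminus ` A"
      by (auto simp: sets_eq_imp_space_eq[OF sets] image_iff) (metis minus_minus)
    ultimately show "emeasure (distr \<nu> borel uminus) A = emeasure \<nu> A"
      using uminus sets by (simp add: emeasure_distr sym)
  qed (use sets in simp)
  then have "(\<integral>t. sin (y \<bullet> t) \<partial>\<nu>) = (\<integral>t. sin (y \<bullet> (- t)) \<partial>\<nu>)"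
    using integral_distr[OF uminus, of "\<lambda>t. sin (y \<bullet> t)"] by simp
  then show ?thesis by simp
qed

lemma levy_exponent_pair_measure:
  fixes \<mu> :: "'m::euclidean_space measure" and \<nu> :: "'n::euclidean_space measure"
  assumes "finite_measure \<mu>" "finite_measure \<nu>" "sets \<mu> = sets borel" "sets \<nu> = sets borel"
    and sin_zero: "\<And>y. (\<integral>t. sin (y \<bullet> t) \<partial>\<nu>) = 0"
  shows "levy_exponent (\<mu> \<Otimes>\<^sub>M \<nu>) (x, y)
    = measure \<nu> (space \<nu>) * levy_exponent \<mu> x + measure \<mu> (space \<mu>) * levy_exponent \<nu> y
      - levy_exponent \<mu> x * levy_exponent \<nu> y"
proof -
  interpret m: finite_measure \<mu> by fact
  interpret n: finite_measure \<nu> by fact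
  interpret pair_sigma_finite \<mu> \<nu> ..
  interpret mn: finite_measure "\<mu> \<Otimes>\<^sub>M \<nu>"
    by (rule finite_measure_pair_measure) (auto simp: assms)
  define C where "C = (\<integral>t. cos (y \<bullet> t) \<partial>\<nu>)"
  define D where "D = (\<integral>s. cos (x \<bullet> s) \<partial>\<mu>)"
  have bm: "(\<lambda>t. cos (y \<bullet> t)) \<in> borel_measurable \<nu>" "(\<lambda>t. sin (y \<bullet> t)) \<in> borel_measurable \<nu>"
    "(\<lambda>s. cos (x \<bullet> s)) \<in> borel_measurable \<mu>"
    unfolding measurable_cong_sets[OF assms(4) refl] measurable_cong_sets[OF assms(3) refl]
    by (intro borel_measurable_continuous_onI continuous_intros)+
  have ic: "integrable \<nu> (\<lambda>t. cos (y \<bullet> t))" "integrable \<nu> (\<lambda>t. sin (y \<bullet> t))"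
    "integrable \<mu> (\<lambda>s. cos (x \<bullet> s))"
    using bm by (auto intro!: m.integrable_const_bound[where B=1] n.integrable_const_bound[where B=1])
  have inner: "(\<integral>t. 1 - cos (x \<bullet> s + y \<bullet> t) \<partial>\<nu>) = measure \<nu> (space \<nu>) - cos (x \<bullet> s) * C" for s
  proof -
    have "(\<integral>t. 1 - cos (x \<bullet> s + y \<bullet> t) \<partial>\<nu>)
        = (\<integral>t. 1 - cos (x \<bullet> s) * cos (y \<bullet> t) + sin (x \<bullet> s) * sin (y \<bullet> t) \<partial>\<nu>)"
      by (simp add: cos_add algebra_simps)
    also have "\<dots> = measure \<nu> (space \<nu>) - cos (x \<bullet> s) * C + sin (x \<bullet> s) * (\<integral>t. sin (y \<bullet> t) \<partial>\<nu>)"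
      using ic by (simp add: C_def)
    finally show ?thesis by (simp add: sin_zero)
  qed
  have "(\<lambda>r. 1 - cos ((x, y) \<bullet> r)) \<in> borel_measurable (\<mu> \<Otimes>\<^sub>M \<nu>)"
    unfolding measurable_cong_sets[OF sets_pair_measure_borel[OF assms(3,4)] refl]
    by (intro borel_measurable_continuous_onI continuous_intros)
  then have "integrable (\<mu> \<Otimes>\<^sub>M \<nu>) (\<lambda>r. 1 - cos ((x, y) \<bullet> r))"
    by (intro mn.integrable_const_bound[where B=2]) auto
  then have "levy_exponent (\<mu> \<Otimes>\<^sub>M \<nu>) (x, y) = (\<integral>s. measure \<nu> (space \<nu>) - cos (x \<bullet> s) * C \<partial>\<mu>)"
    unfolding levy_exponent_def by (simp add: integral_fst'[symmetric] inner)
  also have "\<dots> = measure \<mu> (space \<mu>) * measure \<nu> (space \<nu>) - D * C"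
    using ic by (simp add: D_def)
  finally show ?thesis
    using ic by (simp add: levy_exponent_def C_def[symmetric] D_def[symmetric] algebra_simps)
qed

lemma (in prob_space) dcov_sq_eq_integral_pair_measure:
  fixes X :: "'a \<Rightarrow> 'm::euclidean_space" and Y :: "'a \<Rightarrow> 'n::euclidean_space"
  assumes "finite_measure \<mu>" "finite_measure \<nu>" "sets \<mu> = sets borel" "sets \<nu> = sets borel"
    and X: "X \<in> borel_measurable M" and Y: "Y \<in> borel_measurable M"
  shows "dcov_sq M \<mu> \<nu> X Y = (\<integral>r. (cmod (char_fun M (\<lambda>\<omega>. (X \<omega>, Y \<omega>)) r
      - char_fun M X (fst r) * char_fun M Y (snd r)))\<^sup>2 \<partial>(\<mu> \<Otimes>\<^sub>M \<nu>))"
proof -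
  interpret m: finite_measure \<mu> by fact
  interpret n: finite_measure \<nu> by fact
  interpret pair_sigma_finite \<mu> \<nu> ..
  interpret mn: finite_measure "\<mu> \<Otimes>\<^sub>M \<nu>"
    by (rule finite_measure_pair_measure) (auto simp: assms)
  define h where "h r = (cmod (char_fun M (\<lambda>\<omega>. (X \<omega>, Y \<omega>)) r
      - char_fun M X (fst r) * char_fun M Y (snd r)))\<^sup>2" for r
  have laws: "prob_space (distr M borel (\<lambda>\<omega>. (X \<omega>, Y \<omega>)))"
    "prob_space (distr M borel X)" "prob_space (distr M borel Y)"
    using X Y by (auto intro!: prob_space_distr)
  have "char_fun M (\<lambda>\<omega>. (X \<omega>, Y \<omega>)) \<in> borel_measurable (\<mu> \<Otimes>\<^sub>M \<nu>)"
    "char_fun M X \<in> borel_measurable \<mu>" "char_fun M Y \<in> borel_measurable \<nu>"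
    unfolding char_fun_def[abs_def]
    using borel_measurable_charf[OF laws(1) _ sets_pair_measure_borel[OF assms(3,4)]]
      borel_measurable_charf[OF laws(2) _ assms(3)] borel_measurable_charf[OF laws(3) _ assms(4)]
    by auto
  then have "h \<in> borel_measurable (\<mu> \<Otimes>\<^sub>M \<nu>)"
    unfolding h_def[abs_def] by measurable
  moreover have "\<bar>h r\<bar> \<le> 4" for r
  proof -
    have "cmod (char_fun M (\<lambda>\<omega>. (X \<omega>, Y \<omega>)) r) \<le> 1" "cmod (char_fun M X (fst r)) \<le> 1"
      "cmod (char_fun M Y (snd r)) \<le> 1"
      unfolding char_fun_def using laws by (auto intro: norm_charf_le_1)
    then have "cmod (char_fun M (\<lambda>\<omega>. (X \<omega>, Y \<omega>)) r - char_fun M X (fst r) * char_fun M Y (snd r)) \<le> 2"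
      by (smt (verit) mult_le_one norm_ge_zero norm_mult norm_triangle_ineq4)
    then show ?thesis
      unfolding h_def by (simp add: abs_square_le_1 power_mono[of _ 2 2, simplified])
  qed
  ultimately have "integrable (\<mu> \<Otimes>\<^sub>M \<nu>) h"
    by (intro mn.integrable_const_bound[where B=4]) auto
  then have "(\<integral>t. (\<integral>s. h (s, t) \<partial>\<mu>) \<partial>\<nu>) = integral\<^sup>L (\<mu> \<Otimes>\<^sub>M \<nu>) h"
    using integral_snd[of "\<lambda>s t. h (s, t)"] by (simp add: case_prod_eta)
  then show ?thesis
    unfolding dcov_sq_def h_def by simp
qed

lemma (in prob_space) integrable_levy_exponent_comp:
  fixes \<mu> :: "'b::euclidean_space measure"
  assumes "finite_measure \<mu>" "sets \<mu> = sets borel" "Z \<in> borel_measurable M"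
  shows "integrable M (\<lambda>\<omega>. levy_exponent \<mu> (Z \<omega>))"
  using assms levy_exponent_le[OF assms(1,2)]
  by (intro integrable_bounded[where B="2 * measure \<mu> (space \<mu>)"])
    (auto simp: levy_exponent_nonneg)

lemma (in prob_space) expectation_levy_exponent_pair_measure:
  fixes a :: "'a \<Rightarrow> 'm::euclidean_space" and b :: "'a \<Rightarrow> 'n::euclidean_space"
  assumes fin: "finite_measure \<mu>" "finite_measure \<nu>" and sets: "sets \<mu> = sets borel" "sets \<nu> = sets borel"
    and sin_zero: "\<And>y. (\<integral>t. sin (y \<bullet> t) \<partial>\<nu>) = 0"
    and a: "a \<in> borel_measurable M" and b: "b \<in> borel_measurable M"
  shows "(\<integral>\<omega>. levy_exponent (\<mu> \<Otimes>\<^sub>M \<nu>) (a \<omega>, b \<omega>) \<partial>M)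
    = measure \<nu> (space \<nu>) * (\<integral>\<omega>. levy_exponent \<mu> (a \<omega>) \<partial>M)
      + measure \<mu> (space \<mu>) * (\<integral>\<omega>. levy_exponent \<nu> (b \<omega>) \<partial>M)
      - (\<integral>\<omega>. levy_exponent \<mu> (a \<omega>) * levy_exponent \<nu> (b \<omega>) \<partial>M)"
proof -
  have ia: "integrable M (\<lambda>\<omega>. levy_exponent \<mu> (a \<omega>))"
    and ib: "integrable M (\<lambda>\<omega>. levy_exponent \<nu> (b \<omega>))"
    using integrable_levy_exponent_comp fin sets a b by auto
  have "integrable M (\<lambda>\<omega>. levy_exponent \<mu> (a \<omega>) * levy_exponent \<nu> (b \<omega>))"
  proof (rule integrable_bounded)
    show "(\<lambda>\<omega>. levy_exponent \<mu> (a \<omega>) * levy_exponent \<nu> (b \<omega>)) \<in> borel_measurable M"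
      using borel_measurable_levy_exponent fin sets a b by measurable
    show "\<bar>levy_exponent \<mu> (a \<omega>) * levy_exponent \<nu> (b \<omega>)\<bar>
        \<le> (2 * measure \<mu> (space \<mu>)) * (2 * measure \<nu> (space \<nu>))" for \<omega>
      unfolding abs_mult
      using levy_exponent_le[OF fin(1) sets(1)] levy_exponent_le[OF fin(2) sets(2)]
      by (intro mult_mono) (auto simp: levy_exponent_nonneg)
  qed
  with ia ib show ?thesis
    by (simp add: levy_exponent_pair_measure[OF fin sets sin_zero])
qed

lemma borel_measurable_fst_borel [measurable]:
  "(fst :: 'a::second_countable_topology \<times> 'b::second_countable_topology \<Rightarrow> 'a) \<in> borel_measurable borel"
  by (intro borel_measurable_continuous_onI continuous_on_fst continuous_on_id)

lemma borel_measurable_snd_borel [measurable]: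
  "(snd :: 'a::second_countable_topology \<times> 'b::second_countable_topology \<Rightarrow> 'b) \<in> borel_measurable borel"
  by (intro borel_measurable_continuous_onI continuous_on_snd continuous_on_id)

lemma measurable_component_fst [measurable]:
  assumes "i \<in> I"
  shows "(\<lambda>f. fst (f i)) \<in> borel_measurable (PiM I (\<lambda>_. borel :: ('m::euclidean_space \<times> 'n::euclidean_space) measure))"
  using measurable_compose[OF measurable_component_singleton[OF assms] borel_measurable_fst_borel] by simp

lemma measurable_component_snd [measurable]:
  assumes "i \<in> I"
  shows "(\<lambda>f. snd (f i)) \<in> borel_measurable (PiM I (\<lambda>_. borel :: ('m::euclidean_space \<times> 'n::euclidean_space) measure))"
  using measurable_compose[OF measurable_component_singleton[OF assms] borel_measurable_snd_borel] by simp

lemma distr_distr_Pair: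
  fixes A :: "'a \<Rightarrow> 'b::second_countable_topology" and B :: "'a \<Rightarrow> 'c::second_countable_topology"
  assumes "A \<in> borel_measurable M" "B \<in> borel_measurable M"
  shows "distr (distr M borel (\<lambda>\<omega>. (A \<omega>, B \<omega>))) borel fst = distr M borel A"
    and "distr (distr M borel (\<lambda>\<omega>. (A \<omega>, B \<omega>))) borel snd = distr M borel B"
  using assms by (subst distr_distr; simp add: comp_def)+

locale iid_pair_copies = prob_space M
  for M :: "'a measure" and X :: "'a \<Rightarrow> 'm::euclidean_space" and Y :: "'a \<Rightarrow> 'n::euclidean_space"
    and Xs :: "'i \<Rightarrow> 'a \<Rightarrow> 'm" and Ys :: "'i \<Rightarrow> 'a \<Rightarrow> 'n" and I :: "'i set" +
  assumes measurable_X: "X \<in> borel_measurable M" and measurable_Y: "Y \<in> borel_measurable M"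
    and indep_copies: "indep_vars (\<lambda>_. borel) (\<lambda>i \<omega>. (Xs i \<omega>, Ys i \<omega>)) I"
    and law_copies: "i \<in> I \<Longrightarrow> distr M borel (\<lambda>\<omega>. (Xs i \<omega>, Ys i \<omega>)) = distr M borel (\<lambda>\<omega>. (X \<omega>, Y \<omega>))"
begin

lemma measurable_copies:
  assumes "i \<in> I"
  shows "Xs i \<in> borel_measurable M" "Ys i \<in> borel_measurable M"
proof -
  have "(\<lambda>\<omega>. (Xs i \<omega>, Ys i \<omega>)) \<in> borel_measurable M"
    using indep_copies assms unfolding indep_vars_def by blast
  then show "Xs i \<in> borel_measurable M" "Ys i \<in> borel_measurable M"
    by (auto dest: measurable_compose[OF _ borel_measurable_fst_borel]
      measurable_compose[OF _ borel_measurable_snd_borel])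
qed

lemma indep_blocks:
  assumes "K \<inter> L = {}" "K \<subseteq> I" "L \<subseteq> I"
    and "F \<in> measurable (PiM K (\<lambda>_. borel)) N" "G \<in> measurable (PiM L (\<lambda>_. borel)) N'"
  shows "indep_var N (\<lambda>\<omega>. F (\<lambda>i\<in>K. (Xs i \<omega>, Ys i \<omega>))) N' (\<lambda>\<omega>. G (\<lambda>i\<in>L. (Xs i \<omega>, Ys i \<omega>)))"
  using indep_var_compose[OF indep_var_restrict[OF indep_copies assms(1-3)] assms(4,5)]
  by (simp add: comp_def)

lemma indep_components:
  assumes "i \<in> I" "j \<in> I" "i \<noteq> j"
  shows "indep_var borel (Xs i) borel (Xs j)" "indep_var borel (Ys i) borel (Ys j)"
  using assms indep_blocks[of "{i}" "{j}" "\<lambda>f. fst (f i)" borel "\<lambda>f. fst (f j)" borel]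
    indep_blocks[of "{i}" "{j}" "\<lambda>f. snd (f i)" borel "\<lambda>f. snd (f j)" borel]
  by simp_all

lemma indep_mixed_pairs:
  assumes "i \<in> I" "j \<in> I" "k \<in> I" "l \<in> I" "{i, j} \<inter> {k, l} = {}"
  shows "indep_var borel (\<lambda>\<omega>. (Xs i \<omega>, Ys j \<omega>)) borel (\<lambda>\<omega>. (Xs k \<omega>, Ys l \<omega>))"
proof -
  have "(\<lambda>f. (fst (f i), snd (f j))) \<in> borel_measurable (PiM {i, j} (\<lambda>_. borel :: ('m \<times> 'n) measure))"
    "(\<lambda>f. (fst (f k), snd (f l))) \<in> borel_measurable (PiM {k, l} (\<lambda>_. borel :: ('m \<times> 'n) measure))"
    by measurable
  from indep_blocks[OF _ _ _ this] assms show ?thesis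
    by simp
qed

lemma law_components:
  assumes "i \<in> I"
  shows "distr M borel (Xs i) = distr M borel X" "distr M borel (Ys i) = distr M borel Y"
  using distr_distr_Pair[OF measurable_copies[OF assms]] distr_distr_Pair[OF measurable_X measurable_Y]
  by (simp_all add: law_copies[OF assms])

lemma charf_components:
  assumes "i \<in> I"
  shows "charf (distr M borel (Xs i)) = char_fun M X" "charf (distr M borel (Ys i)) = char_fun M Y"
  by (simp_all add: char_fun_def[abs_def] law_components[OF assms])

lemma charf_mixed_copies:
  assumes "i \<in> I" "j \<in> I" "i \<noteq> j"
  shows "charf (distr M borel (\<lambda>\<omega>. (Xs i \<omega>, Ys j \<omega>))) (s, t) = char_fun M X s * char_fun M Y t"
proof -
  have "(\<lambda>f. cis (s \<bullet> fst (f i))) \<in> borel_measurable (PiM {i} (\<lambda>_. borel :: ('m \<times> 'n) measure))"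
    "(\<lambda>f. cis (t \<bullet> snd (f j))) \<in> borel_measurable (PiM {j} (\<lambda>_. borel :: ('m \<times> 'n) measure))"
    using measurable_compose[OF measurable_component_fst[of i "{i}"] borel_measurable_cis_inner]
      measurable_compose[OF measurable_component_snd[of j "{j}"] borel_measurable_cis_inner]
    by auto
  from indep_blocks[OF _ _ _ this] assms
  have ind: "indep_var borel (\<lambda>\<omega>. cis (s \<bullet> Xs i \<omega>)) borel (\<lambda>\<omega>. cis (t \<bullet> Ys j \<omega>))"
    by simp
  have "integrable M (\<lambda>\<omega>. cis (s \<bullet> Xs i \<omega>))" "integrable M (\<lambda>\<omega>. cis (t \<bullet> Ys j \<omega>))"
    using measurable_copies assms by (auto intro!: integrable_const_bound[where B=1])
  moreover have "char_fun M X s = (\<integral>\<omega>. cis (s \<bullet> Xs i \<omega>) \<partial>M)"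
    "char_fun M Y t = (\<integral>\<omega>. cis (t \<bullet> Ys j \<omega>) \<partial>M)"
    using charf_distr[OF measurable_copies(1)[OF assms(1)], of s] charf_components(1)[OF assms(1)]
      charf_distr[OF measurable_copies(2)[OF assms(2)], of t] charf_components(2)[OF assms(2)]
    by simp_all
  ultimately show ?thesis
    using indep_var_lebesgue_integral[OF ind] measurable_copies assms
    by (simp add: charf_distr cis_mult)
qed

lemma expectation_levy_exponent_pair_measure_copies:
  assumes fin: "finite_measure \<mu>" "finite_measure \<nu>" and sets: "sets \<mu> = sets borel" "sets \<nu> = sets borel"
    and sin_zero: "\<And>y. (\<integral>t. sin (y \<bullet> t) \<partial>\<nu>) = 0"
    and idx: "i \<in> I" "j \<in> I" "k \<in> I" "l \<in> I" "i \<noteq> j" "k \<noteq> l"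
  shows "(\<integral>\<omega>. levy_exponent (\<mu> \<Otimes>\<^sub>M \<nu>) (Xs i \<omega> - Xs j \<omega>, Ys k \<omega> - Ys l \<omega>) \<partial>M)
    = measure \<nu> (space \<nu>) * (\<integral>s. 1 - Re (char_fun M X s * cnj (char_fun M X s)) \<partial>\<mu>)
      + measure \<mu> (space \<mu>) * (\<integral>t. 1 - Re (char_fun M Y t * cnj (char_fun M Y t)) \<partial>\<nu>)
      - (\<integral>\<omega>. levy_exponent \<mu> (Xs i \<omega> - Xs j \<omega>) * levy_exponent \<nu> (Ys k \<omega> - Ys l \<omega>) \<partial>M)"
  using expectation_levy_exponent_pair_measure[OF fin sets sin_zero, of "\<lambda>\<omega>. Xs i \<omega> - Xs j \<omega>" "\<lambda>\<omega>. Ys k \<omega> - Ys l \<omega>"]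
    measurable_copies idx
    expectation_levy_exponent_diff_indep(2)[OF fin(1) sets(1) indep_components(1)[of i j]]
    expectation_levy_exponent_diff_indep(2)[OF fin(2) sets(2) indep_components(2)[of k l]]
  by (simp add: charf_components)

lemma expectation_levy_exponent_product_indep:
  assumes fin: "finite_measure \<mu>" "finite_measure \<nu>" and sets: "sets \<mu> = sets borel" "sets \<nu> = sets borel"
    and idx: "i \<in> I" "j \<in> I" "k \<in> I" "l \<in> I" "{i, j} \<inter> {k, l} = {}"
  shows "(\<integral>\<omega>. levy_exponent \<mu> (Xs i \<omega> - Xs j \<omega>) * levy_exponent \<nu> (Ys k \<omega> - Ys l \<omega>) \<partial>M)
    = (\<integral>\<omega>. levy_exponent \<mu> (Xs i \<omega> - Xs j \<omega>) \<partial>M) * (\<integral>\<omega>. levy_exponent \<nu> (Ys k \<omega> - Ys l \<omega>) \<partial>M)"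
proof (rule indep_var_lebesgue_integral)
  have "(\<lambda>f. levy_exponent \<mu> (fst (f i) - fst (f j))) \<in> borel_measurable (PiM {i, j} (\<lambda>_. borel :: ('m \<times> 'n) measure))"
    "(\<lambda>f. levy_exponent \<nu> (snd (f k) - snd (f l))) \<in> borel_measurable (PiM {k, l} (\<lambda>_. borel :: ('m \<times> 'n) measure))"
    using borel_measurable_levy_exponent[OF fin(1) sets(1)] borel_measurable_levy_exponent[OF fin(2) sets(2)]
    by measurable
  from indep_blocks[OF _ _ _ this] idx
  show "indep_var borel (\<lambda>\<omega>. levy_exponent \<mu> (Xs i \<omega> - Xs j \<omega>)) borel (\<lambda>\<omega>. levy_exponent \<nu> (Ys k \<omega> - Ys l \<omega>))"
    by simp
  show "integrable M (\<lambda>\<omega>. levy_exponent \<mu> (Xs i \<omega> - Xs j \<omega>))"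
    "integrable M (\<lambda>\<omega>. levy_exponent \<nu> (Ys k \<omega> - Ys l \<omega>))"
    using measurable_copies idx by (auto intro!: integrable_levy_exponent_comp fin sets)
qed

end

theorem proposition3p3:
  fixes M :: "'a measure"
    and X :: "'a \<Rightarrow> 'm::euclidean_space" and Y :: "'a \<Rightarrow> 'n::euclidean_space"
    and Xs :: "nat \<Rightarrow> 'a \<Rightarrow> 'm" and Ys :: "nat \<Rightarrow> 'a \<Rightarrow> 'n"
    and \<mu> :: "'m measure" and \<nu> :: "'n measure"
    and \<Phi> :: "'m \<Rightarrow> real" and \<Psi> :: "'n \<Rightarrow> real" and \<Theta> :: "'m \<times> 'n \<Rightarrow> real"
    and \<rho> :: "('m \<times> 'n) measure"
  assumes "prob_space M"
    and "X \<in> borel_measurable M" and "Y \<in> borel_measurable M"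
    and "\<And>i. i \<in> {1..6} \<Longrightarrow> Xs i \<in> borel_measurable M"
    and "\<And>i. i \<in> {1..6} \<Longrightarrow> Ys i \<in> borel_measurable M"
    and "prob_space.indep_vars M (\<lambda>_. borel) (\<lambda>i \<omega>. (Xs i \<omega>, Ys i \<omega>)) {1..6}"
    and "\<And>i. i \<in> {1..6} \<Longrightarrow>
           distr M borel (\<lambda>\<omega>. (Xs i \<omega>, Ys i \<omega>)) = distr M borel (\<lambda>\<omega>. (X \<omega>, Y \<omega>))"
    and "finite_measure \<mu>" and "finite_measure \<nu>"
    and "sym_levy_measure \<mu>" and "sym_levy_measure \<nu>"
    and "full_support \<mu>" and "full_support \<nu>"
    and "\<Phi> = (\<lambda>x. \<integral>s. 1 - cos (x \<bullet> s) \<partial>\<mu>)"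
    and "\<Psi> = (\<lambda>y. \<integral>t. 1 - cos (y \<bullet> t) \<partial>\<nu>)"
    and "\<rho> = \<mu> \<Otimes>\<^sub>M \<nu>"
    and "\<Theta> = (\<lambda>u. \<integral>r. 1 - cos (u \<bullet> r) \<partial>\<rho>)"
  shows
    "let U = (\<lambda>\<omega>. (Xs 1 \<omega>, Ys 1 \<omega>)); V = (\<lambda>\<omega>. (Xs 2 \<omega>, Ys 3 \<omega>));
         U' = (\<lambda>\<omega>. (Xs 4 \<omega>, Ys 4 \<omega>)); V' = (\<lambda>\<omega>. (Xs 5 \<omega>, Ys 6 \<omega>)) in
     dcov_sq M \<mu> \<nu> X Y = (d_rho \<rho> (distr M borel U) (distr M borel V))\<^sup>2
     \<and> (d_rho \<rho> (distr M borel U) (distr M borel V))\<^sup>2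
         = 2 * (\<integral>\<omega>. \<Theta> (U \<omega> - V' \<omega>) \<partial>M) - (\<integral>\<omega>. \<Theta> (U \<omega> - U' \<omega>) \<partial>M)
           - (\<integral>\<omega>. \<Theta> (V \<omega> - V' \<omega>) \<partial>M)
     \<and> 2 * (\<integral>\<omega>. \<Theta> (U \<omega> - V' \<omega>) \<partial>M) - (\<integral>\<omega>. \<Theta> (U \<omega> - U' \<omega>) \<partial>M)
           - (\<integral>\<omega>. \<Theta> (V \<omega> - V' \<omega>) \<partial>M)
         = 2 * (\<integral>\<omega>. \<Theta> (Xs 1 \<omega> - Xs 5 \<omega>, Ys 1 \<omega> - Ys 6 \<omega>) \<partial>M)
           - (\<integral>\<omega>. \<Theta> (Xs 1 \<omega> - Xs 4 \<omega>, Ys 1 \<omega> - Ys 4 \<omega>) \<partial>M)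
           - (\<integral>\<omega>. \<Theta> (Xs 2 \<omega> - Xs 5 \<omega>, Ys 3 \<omega> - Ys 6 \<omega>) \<partial>M)
     \<and> 2 * (\<integral>\<omega>. \<Theta> (Xs 1 \<omega> - Xs 5 \<omega>, Ys 1 \<omega> - Ys 6 \<omega>) \<partial>M)
           - (\<integral>\<omega>. \<Theta> (Xs 1 \<omega> - Xs 4 \<omega>, Ys 1 \<omega> - Ys 4 \<omega>) \<partial>M)
           - (\<integral>\<omega>. \<Theta> (Xs 2 \<omega> - Xs 5 \<omega>, Ys 3 \<omega> - Ys 6 \<omega>) \<partial>M)
         = (\<integral>\<omega>. \<Phi> (Xs 1 \<omega> - Xs 4 \<omega>) * \<Psi> (Ys 1 \<omega> - Ys 4 \<omega>) \<partial>M)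
           + (\<integral>\<omega>. \<Phi> (Xs 2 \<omega> - Xs 5 \<omega>) \<partial>M) * (\<integral>\<omega>. \<Psi> (Ys 3 \<omega> - Ys 6 \<omega>) \<partial>M)
           - 2 * (\<integral>\<omega>. \<Phi> (Xs 1 \<omega> - Xs 5 \<omega>) * \<Psi> (Ys 1 \<omega> - Ys 6 \<omega>) \<partial>M)"
proof -
  interpret iid_pair_copies M X Y Xs Ys "{1..6}"
    using assms(2,3,6,7) by (intro iid_pair_copies.intro[OF assms(1)] iid_pair_copies_axioms.intro) auto
  have sets: "sets \<mu> = sets borel" "sets \<nu> = sets borel"
    using assms(10,11) unfolding sym_levy_measure_def by auto
  have \<rho>: "finite_measure \<rho>" "sets \<rho> = sets borel"
    using assms(8,9,16) sets_pair_measure_borel[OF sets] finite_measure_pair_measure by auto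
  have kernels: "\<Phi> = levy_exponent \<mu>" "\<Psi> = levy_exponent \<nu>" "\<Theta> = levy_exponent \<rho>"
    using assms(14,15,17) by (simp_all add: levy_exponent_def[abs_def])
  define U V U' V' where "U = (\<lambda>\<omega>. (Xs 1 \<omega>, Ys 1 \<omega>))" and "V = (\<lambda>\<omega>. (Xs 2 \<omega>, Ys 3 \<omega>))"
    and "U' = (\<lambda>\<omega>. (Xs 4 \<omega>, Ys 4 \<omega>))" and "V' = (\<lambda>\<omega>. (Xs 5 \<omega>, Ys 6 \<omega>))"
  have indep: "indep_var borel U borel U'" "indep_var borel U borel V'" "indep_var borel V borel V'"
    using indep_mixed_pairs[of 1 1 4 4] indep_mixed_pairs[of 1 1 5 6] indep_mixed_pairs[of 2 3 5 6]
    by (simp_all add: U_def U'_def V_def V'_def)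
  have charf_U: "charf (distr M borel U) = char_fun M (\<lambda>\<omega>. (X \<omega>, Y \<omega>))"
    "charf (distr M borel U') = char_fun M (\<lambda>\<omega>. (X \<omega>, Y \<omega>))"
    by (simp_all add: U_def U'_def law_copies char_fun_def[abs_def])
  have charf_V: "charf (distr M borel V) = (\<lambda>r. char_fun M X (fst r) * char_fun M Y (snd r))"
    "charf (distr M borel V') = (\<lambda>r. char_fun M X (fst r) * char_fun M Y (snd r))"
    by (auto simp: V_def V'_def charf_mixed_copies)
  have energy: "(d_rho \<rho> (distr M borel U) (distr M borel V))\<^sup>2
      = 2 * (\<integral>\<omega>. \<Theta> (U \<omega> - V' \<omega>) \<partial>M) - (\<integral>\<omega>. \<Theta> (U \<omega> - U' \<omega>) \<partial>M)
        - (\<integral>\<omega>. \<Theta> (V \<omega> - V' \<omega>) \<partial>M)"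
    using d_rho_squared_energy[OF \<rho> indep] charf_U charf_V kernels by simp
  have dcov: "dcov_sq M \<mu> \<nu> X Y = (d_rho \<rho> (distr M borel U) (distr M borel V))\<^sup>2"
    using dcov_sq_eq_integral_pair_measure[OF assms(8,9) sets assms(2,3)]
    by (simp add: d_rho_def charf_U charf_V assms(16) Bochner_Integration.integral_nonneg)
  have decomposition: "2 * (\<integral>\<omega>. \<Theta> (Xs 1 \<omega> - Xs 5 \<omega>, Ys 1 \<omega> - Ys 6 \<omega>) \<partial>M)
           - (\<integral>\<omega>. \<Theta> (Xs 1 \<omega> - Xs 4 \<omega>, Ys 1 \<omega> - Ys 4 \<omega>) \<partial>M)
           - (\<integral>\<omega>. \<Theta> (Xs 2 \<omega> - Xs 5 \<omega>, Ys 3 \<omega> - Ys 6 \<omega>) \<partial>M)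
         = (\<integral>\<omega>. \<Phi> (Xs 1 \<omega> - Xs 4 \<omega>) * \<Psi> (Ys 1 \<omega> - Ys 4 \<omega>) \<partial>M)
           + (\<integral>\<omega>. \<Phi> (Xs 2 \<omega> - Xs 5 \<omega>) \<partial>M) * (\<integral>\<omega>. \<Psi> (Ys 3 \<omega> - Ys 6 \<omega>) \<partial>M)
           - 2 * (\<integral>\<omega>. \<Phi> (Xs 1 \<omega> - Xs 5 \<omega>) * \<Psi> (Ys 1 \<omega> - Ys 6 \<omega>) \<partial>M)"
    using expectation_levy_exponent_pair_measure_copies[OF assms(8,9) sets integral_sin_inner_sym_levy[OF assms(11)]]
      expectation_levy_exponent_product_indep[OF assms(8,9) sets, of 2 5 3 6]
    by (simp add: kernels assms(16))
  show ?thesis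
    using dcov energy decomposition by (simp add: Let_def U_def U'_def V_def V'_def)
qed

end
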